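(* Let $f:\mathbb{N}\to[0,\infty)$ be a decreasing function with $\sum_{n=1}^\infty f(n)=\infty$. (1) If $A\subseteq\mathbb{N}$ satisfies $\liminf_{N\to\infty}\frac1N\sum_{n=1}^N\mathbbm{1}(n\in A)>0$, then \[ \sum_{n\in A}f(n)=\infty \qquad\text{and}\qquad \liminf_{N\to\infty}\frac{\sum_{n=1}^N\mathbbm{1}(n\in A)f(n)}{\sum_{n=1}^Nf(n)}>0. \] (2) There exists a convex, strictly increasing function $a:\mathbb{N}\to\mathbb{N}$ with $\lim_{n\to\infty}(a(n)-a(n-1))=\infty$ such that $\sum_{n=1}^\infty f(a(n))=\infty$. *)

theory Defs
  imports "HOL-Analysis.Analysis"
begin

end

theory Submission
  imports Defs
begin

(* Part (1) is Abel summation. With S N = card (A \<inter> {1..N}), the sum of f over A \<inter> {1..N}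
   equals S N * f N + (\<Sum>n=1..<N. S n * (f n - f (n+1))). As f decreases, replacing S n by
   \<delta> * n (valid for large n) can only lower it, so this sum is at least \<delta> times the
   partial sum of f up to N, minus a constant.

   Part (2) chooses the gaps a (n+1) - a n = \<lceil>sqrt (P (a n))\<rceil>, where P x is 1 plus the
   partial sum of f below x. Since P increases to infinity, the gaps increase to infinity.
   On a block [x, y) with y = x + \<lceil>sqrt (P x)\<rceil> we have P y - P x \<le> (sqrt (P x) + 1) * f x
   \<le> 2 * sqrt (P y) * f x, hence sqrt (P y) - sqrt (P x) \<le> 2 * f x; telescoping gives
   \<Sum>n<N. f (a n) \<ge> (sqrt (P (a N)) - 1) / 2, which tends to infinity. *)

lemma not_summable_iff_partial_sums_at_top:
  fixes g :: "nat \<Rightarrow> real"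
  assumes "\<And>n. 0 \<le> g n"
  shows "\<not> summable g \<longleftrightarrow> filterlim (\<lambda>N. \<Sum>n<N. g n) at_top sequentially"
proof
  assume ns: "\<not> summable g"
  show "filterlim (\<lambda>N. \<Sum>n<N. g n) at_top sequentially"
    unfolding filterlim_at_top
  proof
    fix B
    obtain N0 where N0: "B < (\<Sum>n<N0. g n)"
      using summableI_nonneg_bounded[of g B] assms ns by (meson not_le)
    have "B \<le> (\<Sum>n<N. g n)" if "N0 \<le> N" for N
      using N0 sum_mono2[of "{..<N}" "{..<N0}" g] that assms by fastforce
    then show "\<forall>\<^sub>F N in sequentially. B \<le> (\<Sum>n<N. g n)"
      unfolding eventually_sequentially by blast
  qed
next
  assume lim: "filterlim (\<lambda>N. \<Sum>n<N. g n) at_top sequentially"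
  show "\<not> summable g"
  proof
    assume "summable g"
    then have "\<forall>N. (\<Sum>n<N. g n) \<le> suminf g"
      using sum_le_suminf assms by blast
    moreover obtain N where "suminf g + 1 \<le> (\<Sum>n<N. g n)"
      using lim unfolding filterlim_at_top eventually_sequentially by blast
    ultimately show False by (meson add_le_same_cancel1 not_one_le_zero order_trans)
  qed
qed

lemma weighted_sum_ge_density_times_sum:
  fixes f w :: "nat \<Rightarrow> real"
  assumes nonneg: "\<forall>n\<ge>1. 0 \<le> f n" and anti: "antimono_on {1..} f" and "1 \<le> N0"
    and dens: "\<forall>N\<ge>N0. \<delta> * real N \<le> (\<Sum>n=1..N. w n)"
  shows "\<exists>C. \<forall>N\<ge>N0. C + \<delta> * (\<Sum>n=1..N. f n) \<le> (\<Sum>n=1..N. w n * f n)"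
proof -
  define S where "S N = (\<Sum>n=1..N. w n)" for N
  define F where "F N = (\<Sum>n=1..N. f n)" for N
  define T where "T N = (\<Sum>n=1..N. w n * f n)" for N
  define \<Phi> where "\<Phi> N = T N - S N * f N - \<delta> * (F N - real N * f N)" for N
  have \<Phi>_mono: "\<Phi> N0 \<le> \<Phi> N" if "N0 \<le> N" for N
    using that
  proof (induction N rule: dec_induct)
    case (step n)
    have "\<Phi> (Suc n) = \<Phi> n + (S n - \<delta> * real n) * (f n - f (Suc n))"
      by (simp add: \<Phi>_def S_def F_def T_def algebra_simps)
    moreover have "0 \<le> (S n - \<delta> * real n) * (f n - f (Suc n))"
      using dens step.hyps \<open>1 \<le> N0\<close> monotone_onD[OF anti, of n "Suc n"]
      by (intro mult_nonneg_nonneg) (auto simp: S_def)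
    ultimately show ?case
      using step.IH by linarith
  qed simp
  have "\<Phi> N0 + \<delta> * F N \<le> T N" if "N0 \<le> N" for N
  proof -
    have "\<delta> * real N * f N \<le> S N * f N"
      using dens nonneg that \<open>1 \<le> N0\<close> by (intro mult_right_mono) (auto simp: S_def)
    then show ?thesis
      using \<Phi>_mono[OF that] by (simp add: \<Phi>_def algebra_simps)
  qed
  then show ?thesis
    unfolding F_def T_def by blast
qed

lemma positive_density_weighted_sum:
  fixes f w :: "nat \<Rightarrow> real"
  assumes nonneg: "\<forall>n\<ge>1. 0 \<le> f n" and anti: "antimono_on {1..} f"
    and F_at_top: "filterlim (\<lambda>N. \<Sum>n=1..N. f n) at_top sequentially"
    and dens: "Liminf sequentially (\<lambda>N. ereal ((\<Sum>n=1..N. w n) / real N)) > 0"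
  shows "filterlim (\<lambda>N. \<Sum>n=1..N. w n * f n) at_top sequentially"
    and "Liminf sequentially (\<lambda>N. ereal ((\<Sum>n=1..N. w n * f n) / (\<Sum>n=1..N. f n))) > 0"
proof -
  define F where "F N = (\<Sum>n=1..N. f n)" for N
  define T where "T N = (\<Sum>n=1..N. w n * f n)" for N
  obtain \<delta> where "0 < ereal \<delta>"
    and \<delta>: "ereal \<delta> < Liminf sequentially (\<lambda>N. ereal ((\<Sum>n=1..N. w n) / real N))"
    using ereal_dense2[OF dens] by blast
  then have "0 < \<delta>" by simp
  obtain N1 where N1: "\<forall>N\<ge>N1. \<delta> < (\<Sum>n=1..N. w n) / real N"
    using less_LiminfD[OF \<delta>] by (auto simp: eventually_sequentially)
  have "\<delta> * real N \<le> (\<Sum>n=1..N. w n)" if "max N1 1 \<le> N" for N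
  proof -
    have "\<delta> < (\<Sum>n=1..N. w n) / real N" "0 < real N"
      using N1 that by auto
    then show ?thesis
      by (simp add: pos_less_divide_eq)
  qed
  then obtain C where C: "\<forall>N\<ge>max N1 1. C + \<delta> * F N \<le> T N"
    using weighted_sum_ge_density_times_sum[OF nonneg anti, of "max N1 1" \<delta> w]
    unfolding F_def T_def by auto
  then have lower: "\<forall>\<^sub>F N in sequentially. C + \<delta> * F N \<le> T N"
    unfolding eventually_sequentially by blast
  have "filterlim (\<lambda>N. C + \<delta> * F N) at_top sequentially"
    using F_at_top \<open>0 < \<delta>\<close> unfolding F_def
    by (intro filterlim_tendsto_add_at_top[OF tendsto_const]
        filterlim_tendsto_pos_mult_at_top[OF tendsto_const])
  then show "filterlim (\<lambda>N. \<Sum>n=1..N. w n * f n) at_top sequentially"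
    using lower unfolding T_def by (rule filterlim_at_top_mono)
  have "\<forall>\<^sub>F N in sequentially. max 1 (- 2 * C / \<delta>) \<le> F N"
    using F_at_top unfolding F_def filterlim_at_top by blast
  then have "\<forall>\<^sub>F N in sequentially. ereal (\<delta> / 2) \<le> ereal (T N / F N)"
    using lower
  proof eventually_elim
    case (elim N)
    then have "-2 * C / \<delta> \<le> F N" "1 \<le> F N"
      by simp_all
    then have "-2 * C \<le> \<delta> * F N" "1 \<le> F N"
      using \<open>0 < \<delta>\<close> by (metis pos_divide_le_eq mult.commute)+
    then have "\<delta> / 2 * F N \<le> T N"
      using elim by linarith
    with \<open>1 \<le> F N\<close> show ?case
      by (simp add: pos_le_divide_eq)
  qed
  then have "ereal (\<delta> / 2) \<le> Liminf sequentially (\<lambda>N. ereal (T N / F N))"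
    by (rule Liminf_bounded)
  then show "Liminf sequentially (\<lambda>N. ereal ((\<Sum>n=1..N. w n * f n) / (\<Sum>n=1..N. f n))) > 0"
    using \<open>0 < \<delta>\<close> unfolding T_def F_def by (simp add: less_le_trans[rotated])
qed

lemma positive_density_set_sum:
  fixes f :: "nat \<Rightarrow> real" and A :: "nat set"
  assumes nonneg: "\<forall>n\<ge>1. 0 \<le> f n" and anti: "antimono_on {1..} f"
    and div: "\<not> summable (\<lambda>n. f (Suc n))"
    and dens: "Liminf sequentially (\<lambda>N. ereal (real (card (A \<inter> {1..N})) / real N)) > 0"
  shows "\<not> summable (\<lambda>n. indicator A (Suc n) * f (Suc n))"
    and "Liminf sequentially (\<lambda>N. ereal ((\<Sum>n=1..N. indicator A n * f n) / (\<Sum>n=1..N. f n))) > 0"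
proof -
  have F_at_top: "filterlim (\<lambda>N. \<Sum>n=1..N. f n) at_top sequentially"
    using not_summable_iff_partial_sums_at_top[of "\<lambda>n. f (Suc n)"] nonneg div
    by (simp add: sum.atLeast1_atMost_eq)
  have "real (card (A \<inter> {1..N})) = (\<Sum>n=1..N. indicator A n)" for N
    using sum.inter_restrict[of "{1..N}" "\<lambda>_. 1 :: real" A] by (simp add: indicator_def Int_commute)
  then have dens': "Liminf sequentially (\<lambda>N. ereal ((\<Sum>n=1..N. indicator A n) / real N)) > 0"
    using dens by simp
  note weighted = positive_density_weighted_sum[OF nonneg anti F_at_top dens']
  have "0 \<le> indicator A (Suc n) * f (Suc n)" for n
    using nonneg by simp
  then show "\<not> summable (\<lambda>n. indicator A (Suc n) * f (Suc n))"
    using weighted(1) not_summable_iff_partial_sums_at_top[of "\<lambda>n. indicator A (Suc n) * f (Suc n)"]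
    by (simp add: sum.atLeast1_atMost_eq)
  show "Liminf sequentially (\<lambda>N. ereal ((\<Sum>n=1..N. indicator A n * f n) / (\<Sum>n=1..N. f n))) > 0"
    using weighted(2) .
qed

fun gap_seq :: "(nat \<Rightarrow> nat) \<Rightarrow> nat \<Rightarrow> nat" where
  "gap_seq g 0 = 1"
| "gap_seq g (Suc n) = gap_seq g n + g (gap_seq g n)"

lemma gap_seq_ge:
  assumes "\<And>x. 1 \<le> g x"
  shows "Suc n \<le> gap_seq g n"
proof (induction n)
  case (Suc n)
  then show ?case using assms[of "gap_seq g n"] by simp
qed simp

lemma strict_mono_gap_seq:
  assumes "\<And>x. 1 \<le> g x"
  shows "strict_mono (gap_seq g)"
  unfolding strict_mono_Suc_iff using assms by (simp add: Suc_le_eq)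

lemma gap_seq_convex:
  assumes "mono g"
  shows "2 * gap_seq g (Suc n) \<le> gap_seq g n + gap_seq g (Suc (Suc n))"
  using monoD[OF assms, of "gap_seq g n" "gap_seq g (Suc n)"] by simp

lemma gap_seq_gaps_at_top:
  assumes "\<And>x. 1 \<le> g x" and "filterlim g at_top sequentially"
  shows "filterlim (\<lambda>n. real (gap_seq g (Suc n)) - real (gap_seq g n)) at_top sequentially"
proof -
  have "filterlim (\<lambda>n. real (g (gap_seq g n))) at_top sequentially"
    using filterlim_compose[OF filterlim_real_sequentially
        filterlim_compose[OF assms(2) filterlim_subseq[OF strict_mono_gap_seq[OF assms(1)]]]] .
  then show ?thesis by simp
qed

lemma sqrt_diff_le_of_diff_le:
  fixes p q c :: real
  assumes "0 \<le> p" "p \<le> q" "0 < q" and "q - p \<le> 2 * sqrt q * c"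
  shows "sqrt q - sqrt p \<le> 2 * c"
proof -
  have "(sqrt q - sqrt p) * sqrt q \<le> (sqrt q - sqrt p) * (sqrt q + sqrt p)"
    using assms by (intro mult_left_mono) auto
  also have "\<dots> = q - p"
    using assms by (simp add: algebra_simps)
  finally have "(sqrt q - sqrt p) * sqrt q \<le> (2 * c) * sqrt q"
    using assms(4) by (simp add: algebra_simps)
  then show ?thesis
    using assms(3) by (simp add: mult_le_cancel_right)
qed

(* Sums start at 1 since the hypotheses say nothing about f 0; the summand 1 keeps every
   gap sqrt_gap f x at least 1. *)
definition mass :: "(nat \<Rightarrow> real) \<Rightarrow> nat \<Rightarrow> real" where
  "mass f x = 1 + (\<Sum>m=1..<x. f m)"

definition sqrt_gap :: "(nat \<Rightarrow> real) \<Rightarrow> nat \<Rightarrow> nat" where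
  "sqrt_gap f x = nat \<lceil>sqrt (mass f x)\<rceil>"

lemma mass_mono:
  assumes "\<forall>n\<ge>1. 0 \<le> f n"
  shows "mono (mass f)"
proof
  fix x y :: nat
  assume "x \<le> y"
  then show "mass f x \<le> mass f y"
    unfolding mass_def using assms by (auto intro!: sum_mono2)
qed

lemma mass_ge_1:
  assumes "\<forall>n\<ge>1. 0 \<le> f n"
  shows "1 \<le> mass f x"
  using monoD[OF mass_mono[OF assms], of 0 x] by (simp add: mass_def)

lemma mass_Suc_at_top:
  assumes "\<forall>n\<ge>1. 0 \<le> f n" and "\<not> summable (\<lambda>n. f (Suc n))"
  shows "filterlim (\<lambda>N. mass f (Suc N)) at_top sequentially"
proof -
  have "mass f (Suc N) = 1 + (\<Sum>k<N. f (Suc k))" for N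
    by (simp add: mass_def atLeastLessThanSuc_atLeastAtMost sum.atLeast1_atMost_eq)
  moreover have "filterlim (\<lambda>N. \<Sum>k<N. f (Suc k)) at_top sequentially"
    using not_summable_iff_partial_sums_at_top[of "\<lambda>k. f (Suc k)"] assms by simp
  ultimately show ?thesis
    using filterlim_tendsto_add_at_top[OF tendsto_const] by simp
qed

lemma sqrt_mass_le_sqrt_gap:
  assumes "\<forall>n\<ge>1. 0 \<le> f n"
  shows "sqrt (mass f x) \<le> real (sqrt_gap f x)"
  using mass_ge_1[OF assms, of x] le_of_int_ceiling[of "sqrt (mass f x)"]
  unfolding sqrt_gap_def by simp

lemma sqrt_gap_le_sqrt_mass:
  assumes "\<forall>n\<ge>1. 0 \<le> f n"
  shows "real (sqrt_gap f x) \<le> sqrt (mass f x) + 1"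
  using mass_ge_1[OF assms, of x] of_int_ceiling_le_add_one[of "sqrt (mass f x)"]
  unfolding sqrt_gap_def by simp

lemma sqrt_gap_ge_1:
  assumes "\<forall>n\<ge>1. 0 \<le> f n"
  shows "1 \<le> sqrt_gap f x"
  using mass_ge_1[OF assms, of x] sqrt_mass_le_sqrt_gap[OF assms, of x]
  by (metis of_nat_1 of_nat_le_iff order_trans real_sqrt_ge_one)

lemma mono_sqrt_gap:
  assumes "\<forall>n\<ge>1. 0 \<le> f n"
  shows "mono (sqrt_gap f)"
  unfolding sqrt_gap_def
  by (intro monoI nat_mono ceiling_mono real_sqrt_le_mono monoD[OF mass_mono[OF assms]])

lemma sqrt_gap_at_top:
  assumes "\<forall>n\<ge>1. 0 \<le> f n" and "\<not> summable (\<lambda>n. f (Suc n))"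
  shows "filterlim (sqrt_gap f) at_top sequentially"
proof -
  have "filterlim (\<lambda>x. sqrt (mass f x)) at_top sequentially"
    using filterlim_compose[OF sqrt_at_top mass_Suc_at_top[OF assms]]
    by (rule filterlim_sequentially_Suc[THEN iffD1])
  then have "filterlim (\<lambda>x. real (sqrt_gap f x)) at_top sequentially"
    by (rule filterlim_at_top_mono) (simp add: sqrt_mass_le_sqrt_gap[OF assms(1)])
  then show ?thesis
    by (simp add: filterlim_sequentially_iff_filterlim_real)
qed

lemma sqrt_mass_gap_step_le:
  assumes nonneg: "\<forall>n\<ge>1. 0 \<le> f n" and anti: "antimono_on {1..} f" and "1 \<le> x"
  shows "sqrt (mass f (x + sqrt_gap f x)) - sqrt (mass f x) \<le> 2 * f x"
proof (rule sqrt_diff_le_of_diff_le)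
  define y where "y = x + sqrt_gap f x"
  have fx: "0 \<le> f x" using nonneg \<open>1 \<le> x\<close> by simp
  have "mass f y - mass f x = (\<Sum>m=x..<y. f m)"
    using sum.atLeastLessThan_concat[of 1 x y f] \<open>1 \<le> x\<close> by (simp add: mass_def y_def)
  also have "\<dots> \<le> (\<Sum>m=x..<y. f x)"
    using \<open>1 \<le> x\<close> by (intro sum_mono monotone_onD[OF anti]) auto
  also have "\<dots> = real (sqrt_gap f x) * f x"
    by (simp add: y_def)
  also have "\<dots> \<le> (sqrt (mass f x) + 1) * f x"
    using sqrt_gap_le_sqrt_mass[OF nonneg] fx by (rule mult_right_mono)
  also have "\<dots> \<le> 2 * sqrt (mass f y) * f x"
  proof (rule mult_right_mono[OF _ fx])
    have "sqrt (mass f x) \<le> sqrt (mass f y)" "1 \<le> sqrt (mass f x)"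
      using monoD[OF mass_mono[OF nonneg]] mass_ge_1[OF nonneg] by (simp_all add: y_def)
    then show "sqrt (mass f x) + 1 \<le> 2 * sqrt (mass f y)"
      by linarith
  qed
  finally show "mass f y - mass f x \<le> 2 * sqrt (mass f y) * f x" .
  show "0 \<le> mass f x" "0 < mass f y"
    using mass_ge_1[OF nonneg, of x] mass_ge_1[OF nonneg, of y] by simp_all
  show "mass f x \<le> mass f y"
    using monoD[OF mass_mono[OF nonneg]] by (simp add: y_def)
qed

lemma not_summable_along_sqrt_gap_seq:
  assumes nonneg: "\<forall>n\<ge>1. 0 \<le> f n" and anti: "antimono_on {1..} f"
    and div: "\<not> summable (\<lambda>n. f (Suc n))"
  shows "\<not> summable (\<lambda>n. f (gap_seq (sqrt_gap f) n))"
proof -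
  define b where "b = gap_seq (sqrt_gap f)"
  have b_ge: "Suc n \<le> b n" for n
    unfolding b_def using gap_seq_ge sqrt_gap_ge_1[OF nonneg] by blast
  have telescope: "sqrt (mass f (b N)) - 1 \<le> 2 * (\<Sum>n<N. f (b n))" for N
  proof -
    have "sqrt (mass f (b N)) - 1 = (\<Sum>n<N. sqrt (mass f (b (Suc n))) - sqrt (mass f (b n)))"
      by (subst sum_lessThan_telescope) (simp add: b_def mass_def)
    also have "\<dots> \<le> (\<Sum>n<N. 2 * f (b n))"
    proof (rule sum_mono)
      fix n
      show "sqrt (mass f (b (Suc n))) - sqrt (mass f (b n)) \<le> 2 * f (b n)"
        using sqrt_mass_gap_step_le[OF nonneg anti, of "b n"] b_ge[of n] by (simp add: b_def)
    qed
    finally show ?thesis by (simp add: sum_distrib_left)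
  qed
  have "filterlim (\<lambda>N. sqrt (mass f (Suc N))) at_top sequentially"
    using filterlim_compose[OF sqrt_at_top mass_Suc_at_top[OF nonneg div]] .
  then have "filterlim (\<lambda>N. sqrt (mass f (b N))) at_top sequentially"
    by (rule filterlim_at_top_mono)
      (use b_ge monoD[OF mass_mono[OF nonneg]] in \<open>simp add: real_sqrt_le_mono\<close>)
  then have "filterlim (\<lambda>N. 1 + 2 * (\<Sum>n<N. f (b n))) at_top sequentially"
    by (rule filterlim_at_top_mono) (use telescope in \<open>simp add: algebra_simps\<close>)
  then have "filterlim (\<lambda>N. \<Sum>n<N. f (b n)) at_top sequentially"
    by (simp add: filterlim_tendsto_add_at_top_iff[OF tendsto_const]
        filterlim_tendsto_pos_mult_at_top_iff[OF tendsto_const])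
  moreover have "0 \<le> f (b n)" for n
    using nonneg b_ge[of n] by simp
  ultimately show ?thesis
    using not_summable_iff_partial_sums_at_top[of "\<lambda>n. f (b n)"] by (simp add: b_def)
qed

lemma exists_convex_sequence_not_summable:
  fixes f :: "nat \<Rightarrow> real"
  assumes nonneg: "\<forall>n\<ge>1. 0 \<le> f n" and anti: "antimono_on {1..} f"
    and div: "\<not> summable (\<lambda>n. f (Suc n))"
  shows "\<exists>a. (\<forall>n. 1 \<le> a n) \<and> strict_mono a \<and> (\<forall>n. 2 * a (Suc n) \<le> a n + a (Suc (Suc n))) \<and>
    filterlim (\<lambda>n. real (a (Suc n)) - real (a n)) at_top sequentially \<and>
    \<not> summable (\<lambda>n. f (a n))"
proof (intro exI conjI allI)
  have gap_ge_1: "1 \<le> sqrt_gap f x" for x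
    using sqrt_gap_ge_1[OF nonneg] .
  show "1 \<le> gap_seq (sqrt_gap f) n" for n
    using gap_seq_ge[of "sqrt_gap f", OF gap_ge_1, of n] by simp
  show "strict_mono (gap_seq (sqrt_gap f))"
    using strict_mono_gap_seq[OF gap_ge_1] .
  show "2 * gap_seq (sqrt_gap f) (Suc n) \<le> gap_seq (sqrt_gap f) n + gap_seq (sqrt_gap f) (Suc (Suc n))" for n
    using gap_seq_convex[OF mono_sqrt_gap[OF nonneg]] .
  show "filterlim (\<lambda>n. real (gap_seq (sqrt_gap f) (Suc n)) - real (gap_seq (sqrt_gap f) n)) at_top sequentially"
    using gap_seq_gaps_at_top[OF gap_ge_1 sqrt_gap_at_top[OF nonneg div]] .
  show "\<not> summable (\<lambda>n. f (gap_seq (sqrt_gap f) n))"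
    using not_summable_along_sqrt_gap_seq[OF nonneg anti div] .
qed

theorem lemma2p7:
  fixes f :: "nat \<Rightarrow> real"
  assumes nonneg: "\<forall>n\<ge>1. f n \<ge> 0"
    and decr: "\<forall>m n. 1 \<le> m \<longrightarrow> m \<le> n \<longrightarrow> f n \<le> f m"
    and div: "\<not> summable (\<lambda>n. f (Suc n))"
  shows "(\<forall>A :: nat set.
            Liminf sequentially (\<lambda>N. ereal (real (card (A \<inter> {1..N})) / real N)) > 0 \<longrightarrow>
              \<not> summable (\<lambda>n. indicator A (Suc n) * f (Suc n)) \<and>
              Liminf sequentially
                (\<lambda>N. ereal ((\<Sum>n=1..N. indicator A n * f n) / (\<Sum>n=1..N. f n))) > 0)
       \<and> (\<exists>a :: nat \<Rightarrow> nat.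
            (\<forall>n\<ge>1. a n \<ge> 1) \<and>
            (\<forall>n\<ge>1. a n < a (Suc n)) \<and>
            (\<forall>n\<ge>1. 2 * a (Suc n) \<le> a n + a (Suc (Suc n))) \<and>
            filterlim (\<lambda>n. real (a (Suc n)) - real (a n)) at_top sequentially \<and>
            \<not> summable (\<lambda>n. f (a (Suc n))))"
proof -
  have anti: "antimono_on {1..} f"
    using decr by (auto intro: monotone_onI)
  obtain a :: "nat \<Rightarrow> nat" where "\<forall>n. 1 \<le> a n" "strict_mono a"
    "\<forall>n. 2 * a (Suc n) \<le> a n + a (Suc (Suc n))"
    "filterlim (\<lambda>n. real (a (Suc n)) - real (a n)) at_top sequentially" "\<not> summable (\<lambda>n. f (a n))"
    using exists_convex_sequence_not_summable[OF nonneg anti div] by blast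
  then show ?thesis
    using positive_density_set_sum[OF nonneg anti div] summable_Suc_iff[of "\<lambda>n. f (a n)"]
    by (intro conjI allI impI exI[of _ a]) (auto simp: strict_mono_Suc_iff)
qed

end
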